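(* Let $\mathbf{Q}=\langle Q,\vee,\cdot,\bot,e\rangle$ be a quantale, $X,Y$ non-empty sets, and $p\in Q^{X\times Y}$ strong, i.e. there is an injective map $\varepsilon:Y\to X$ such that $p(\varepsilon(y),y)=e$ for all $y\in Y$ and $p(\varepsilon(y_1),y_2)=\bot$ for all $y_1\ne y_2$ in $Y$. Let $H_p:Q^X\to Q^Y$, $H_pf(y)=\bigvee_{x\in X}f(x)\cdot p(x,y)$, and $\Lambda_p:Q^Y\to Q^X$, $\Lambda_pg(x)=\bigwedge_{y\in Y}g(y)/p(x,y)$. Then $H_p\circ\Lambda_p=\operatorname{id}_{Q^Y}$; consequently $H_p$ is surjective and $\Lambda_p$ is injective.
   Context: A quantale is a structure $\langle Q,\vee,\cdot,\bot,e\rangle$ where $\langle Q,\vee,\bot\rangle$ is a complete lattice, $\langle Q,\cdot,e\rangle$ is a monoid, and multiplication distributes over arbitrary joins on both sides; $/$ is the right residuum: $x\cdot y\le z\iff x\le z/y$. $Q^X$ denotes the set of functions $X\to Q$ with the pointwise order. *)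

theory Defs
  imports Main
begin

text \<open>A quantale: complete lattice + monoid (written multiplicatively, unit 1 = e),
  with multiplication distributing over arbitrary joins on both sides.
  The bottom element is bot = Sup {}.\<close>
class quantale = complete_lattice + monoid_mult +
  assumes Sup_distl: "x * Sup A = Sup ((\<lambda>a. x * a) ` A)"
  assumes Sup_distr: "Sup A * y = Sup ((\<lambda>a. a * y) ` A)"

text \<open>Right residuum  z / y : the greatest x with x * y \<le> z.\<close>
definition rres :: "'q::quantale \<Rightarrow> 'q \<Rightarrow> 'q" where
  "rres z y = Sup {x. x * y \<le> z}"

definition strong :: "('x \<Rightarrow> 'y \<Rightarrow> 'q::quantale) \<Rightarrow> bool" where
  "strong p \<longleftrightarrow> (\<exists>\<epsilon> :: 'y \<Rightarrow> 'x. inj \<epsilon> \<and> (\<forall>y. p (\<epsilon> y) y = 1)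
      \<and> (\<forall>y1 y2. y1 \<noteq> y2 \<longrightarrow> p (\<epsilon> y1) y2 = bot))"

definition Hp :: "('x \<Rightarrow> 'y \<Rightarrow> 'q::quantale) \<Rightarrow> ('x \<Rightarrow> 'q) \<Rightarrow> ('y \<Rightarrow> 'q)" where
  "Hp p f = (\<lambda>y. SUP x. f x * p x y)"

definition Lp :: "('x \<Rightarrow> 'y \<Rightarrow> 'q::quantale) \<Rightarrow> ('y \<Rightarrow> 'q) \<Rightarrow> ('x \<Rightarrow> 'q)" where
  "Lp p g = (\<lambda>x. INF y. rres (g y) (p x y))"

end

theory Submission
  imports Defs
begin

text \<open>\<open>H\<^sub>p (\<Lambda>\<^sub>p g) \<le> g\<close> holds for every \<open>p\<close>, because each term \<open>\<Lambda>\<^sub>p g x \<cdot> p x y\<close> is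
  bounded by \<open>(g y / p x y) \<cdot> p x y \<le> g y\<close>. For the converse, the section \<open>\<epsilon>\<close> of a strong \<open>p\<close>
  gives \<open>g y \<cdot> p (\<epsilon> y) y' \<le> g y'\<close> for all \<open>y'\<close> (it is \<open>g y\<close> for \<open>y' = y\<close> and \<open>\<bottom>\<close> otherwise),
  so \<open>g y \<le> \<Lambda>\<^sub>p g (\<epsilon> y) = \<Lambda>\<^sub>p g (\<epsilon> y) \<cdot> p (\<epsilon> y) y \<le> H\<^sub>p (\<Lambda>\<^sub>p g) y\<close>.\<close>

lemma mult_bot_right [simp]: "(x::'q::quantale) * bot = bot"
  using Sup_distl[of x "{}"] by simp

lemma mult_right_mono_quantale:
  fixes a b c :: "'q::quantale"
  assumes "a \<le> b"
  shows "a * c \<le> b * c"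
proof -
  have "b * c = Sup {a, b} * c" using assms by (simp add: sup_absorb2)
  also have "\<dots> = sup (a * c) (b * c)" using Sup_distr[of "{a, b}" c] by simp
  finally show ?thesis by (metis sup_ge1)
qed

lemma le_rres: "(x::'q::quantale) * y \<le> z \<Longrightarrow> x \<le> rres z y"
  unfolding rres_def by (rule Sup_upper) simp

lemma rres_mult_le: "rres (z::'q::quantale) y * y \<le> z"
  unfolding rres_def Sup_distr by (auto intro: Sup_least)

lemma Hp_Lp_le: "Hp p (Lp p g) y \<le> g y"
  unfolding Hp_def
proof (rule SUP_least)
  fix x
  have "Lp p g x \<le> rres (g y) (p x y)"
    unfolding Lp_def by (rule INF_lower) simp
  then have "Lp p g x * p x y \<le> rres (g y) (p x y) * p x y"
    by (rule mult_right_mono_quantale)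
  also have "\<dots> \<le> g y" by (rule rres_mult_le)
  finally show "Lp p g x * p x y \<le> g y" .
qed

lemma le_Hp_Lp:
  assumes "strong p"
  shows "g y \<le> Hp p (Lp p g) y"
proof -
  obtain \<epsilon> where unit: "\<And>y. p (\<epsilon> y) y = 1"
    and zero: "\<And>y1 y2. y1 \<noteq> y2 \<Longrightarrow> p (\<epsilon> y1) y2 = bot"
    using assms unfolding strong_def by blast
  have "g y * p (\<epsilon> y) y' \<le> g y'" for y'
    by (cases "y = y'") (simp_all add: unit zero)
  then have "g y \<le> Lp p g (\<epsilon> y)"
    unfolding Lp_def by (intro INF_greatest le_rres)
  also have "\<dots> = Lp p g (\<epsilon> y) * p (\<epsilon> y) y" by (simp add: unit)
  also have "\<dots> \<le> Hp p (Lp p g) y"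
    unfolding Hp_def by (rule SUP_upper) simp
  finally show ?thesis .
qed

lemma Hp_Lp_eq:
  assumes "strong p"
  shows "Hp p (Lp p g) = g"
  using Hp_Lp_le le_Hp_Lp[OF assms] by (intro ext antisym)

theorem theorem4p4:
  fixes p :: "'x \<Rightarrow> 'y \<Rightarrow> 'q::quantale"
  assumes "strong p"
  shows "Hp p \<circ> Lp p = id \<and> surj (Hp p) \<and> inj (Lp p)"
proof -
  have left_inverse: "\<And>g. Hp p (Lp p g) = g" using Hp_Lp_eq[OF assms] .
  then have "Hp p \<circ> Lp p = id" by auto
  moreover have "surj (Hp p)" using left_inverse by (metis surjI)
  moreover have "inj (Lp p)" using left_inverse by (metis injI)
  ultimately show ?thesis by blast
qed

end
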